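(* Let $\mathcal{X}\subset\mathbb{R}^2$ and let $\mathbf{f}=(f_1,\ldots,f_p)^\top:\mathcal{X}\to\mathbb{R}^p$ have linearly independent component functions (regression model $\mu(\mathbf{x})=\mathbf{f}^\top(\mathbf{x})\boldsymbol\theta$). Let $t:\mathcal{X}\to\mathbb{R}$ be a function with range $\mathcal{T}$, and for $t\in\mathcal{T}$ let $\widetilde{\mathcal{X}}(t)=\{\mathbf{x}\in\mathcal{X}:t(\mathbf{x})=t\}$ and let $\widetilde{\mathbf{f}}_t=(\widetilde f_{1t},\ldots,\widetilde f_{p_t,t})^\top:\widetilde{\mathcal{X}}(t)\to\mathbb{R}^{p_t}$ be a vector of functions that are linearly independent on $\widetilde{\mathcal{X}}(t)$ and span the same linear space as the restrictions of $f_1,\ldots,f_p$ to $\widetilde{\mathcal{X}}(t)$ (the conditional model given $t$). If a design $\xi$ on $\mathcal{X}$ is admissible in the class of all designs on $\mathcal{X}$ for the model with regression vector $\mathbf{f}$, then for every $t\in\mathcal{T}$ with $\xi_t(t)>0$ the conditional design $\xi_{\mathbf{x}|t}$ is admissible in the class $\Xi_t$ of all designs on $\widetilde{\mathcal{X}}(t)$ for the conditional model with regression vector $\widetilde{\mathbf{f}}_t$.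
   Context: A design on a set $S$ is a probability measure on $S$ with finite support. For the model with regression vector $\mathbf{f}$ on $\mathcal{X}$, the information matrix of $\xi$ is $\mathbf{M}(\xi)=\int\mathbf{f}\mathbf{f}^\top d\xi$; $\xi_1$ is admissible if there is no design $\xi_2$ on $\mathcal{X}$ with $\mathbf{M}(\xi_2)\neq\mathbf{M}(\xi_1)$ and $\mathbf{M}(\xi_2)-\mathbf{M}(\xi_1)$ nonnegative definite. Analogously, for the conditional model the information matrix of a design $\eta$ on $\widetilde{\mathcal{X}}(t)$ is $\mathbf{M}_t(\eta)=\int_{\widetilde{\mathcal{X}}(t)}\widetilde{\mathbf{f}}_t\widetilde{\mathbf{f}}_t^\top d\eta$, and admissibility in $\Xi_t$ is defined in the same way with $\mathbf{M}_t$ in place of $\mathbf{M}$. For a design $\xi$ on $\mathcal{X}$, $\xi_t(t)=\xi(\widetilde{\mathcal{X}}(t))$, and if $\xi_t(t)>0$ the conditional design is the probability measure $\xi_{\mathbf{x}|t}(A)=\xi(A\cap\widetilde{\mathcal{X}}(t))/\xi_t(t)$ on $\widetilde{\mathcal{X}}(t)$. *)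

theory Defs
  imports "HOL-Analysis.Analysis" "HOL-Probability.Probability"
begin

definition design :: "'a set \<Rightarrow> 'a pmf \<Rightarrow> bool" where
  "design S \<xi> \<longleftrightarrow> finite (set_pmf \<xi>) \<and> set_pmf \<xi> \<subseteq> S"

text \<open>Information matrix  M(xi) = integral of f f^T d xi  (finite support, so a finite sum).\<close>
definition info_matrix :: "('a \<Rightarrow> real^'p) \<Rightarrow> 'a pmf \<Rightarrow> real^'p^'p" where
  "info_matrix f \<xi> = (\<Sum>x\<in>set_pmf \<xi>. pmf \<xi> x *\<^sub>R (\<chi> i j. f x $ i * f x $ j))"

definition nonneg_def :: "real^'p^'p \<Rightarrow> bool" where
  "nonneg_def A \<longleftrightarrow> transpose A = A \<and> (\<forall>v. 0 \<le> v \<bullet> (A *v v))"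

definition admissible :: "'a set \<Rightarrow> ('a \<Rightarrow> real^'p) \<Rightarrow> 'a pmf \<Rightarrow> bool" where
  "admissible S f \<xi> \<longleftrightarrow> design S \<xi> \<and>
     \<not> (\<exists>\<xi>2. design S \<xi>2 \<and> info_matrix f \<xi>2 \<noteq> info_matrix f \<xi> \<and>
              nonneg_def (info_matrix f \<xi>2 - info_matrix f \<xi>))"

definition lin_indep_on :: "'a set \<Rightarrow> ('a \<Rightarrow> real^'p) \<Rightarrow> bool" where
  "lin_indep_on S f \<longleftrightarrow> (\<forall>c. (\<forall>x\<in>S. c \<bullet> f x = 0) \<longrightarrow> c = 0)"

definition same_span_on :: "'a set \<Rightarrow> ('a \<Rightarrow> real^'p) \<Rightarrow> ('a \<Rightarrow> real^'q) \<Rightarrow> bool" where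
  "same_span_on S f g \<longleftrightarrow>
     (\<forall>i. \<exists>c. \<forall>x\<in>S. g x $ i = c \<bullet> f x) \<and> (\<forall>i. \<exists>d. \<forall>x\<in>S. f x $ i = d \<bullet> g x)"

end

theory Submission
  imports Defs
begin

text \<open>Suppose \<eta>' improved on the conditional design \<eta> = \<xi>(\<cdot> | S), S = {x \<in> X. tf x = t}, and
  let p = \<xi>(S). Resampling every point of S from \<eta>' turns \<xi> into a design \<xi>' with
  \<xi>' - \<xi> = p (\<eta>' - \<eta>). Both f and the conditional regression vector g are linear images of
  each other on S, say f = A g, and the linear independence of g makes A left invertible.
  Hence M(\<xi>') - M(\<xi>) = p A (M_t(\<eta>') - M_t(\<eta>)) A^T is nonnegative definite and nonzero,
  contradicting the admissibility of \<xi>.\<close>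

definition outer_prod :: "real^'n \<Rightarrow> real^'n^'n" where
  "outer_prod v = (\<chi> i j. v $ i * v $ j)"

lemma info_matrix_eq_sum:
  assumes "finite F" "set_pmf \<xi> \<subseteq> F"
  shows "info_matrix f \<xi> = (\<Sum>x\<in>F. pmf \<xi> x *\<^sub>R outer_prod (f x))"
  unfolding info_matrix_def outer_prod_def
  by (rule sum.mono_neutral_left) (use assms in \<open>auto simp: set_pmf_eq\<close>)

lemma outer_prod_matrix_vector_mult:
  fixes A :: "real^'q^'p"
  shows "outer_prod (A *v w) = A ** outer_prod w ** transpose A"
  unfolding outer_prod_def
  by (simp add: vec_eq_iff matrix_matrix_mult_def matrix_vector_mult_def transpose_def
      sum_product sum_distrib_left sum_distrib_right mult_ac)

lemma linear_matrix_sandwich: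
  fixes A :: "real^'m^'n" and B :: "real^'k^'l"
  shows "linear (\<lambda>P. A ** P ** B)"
proof (rule linearI)
  show "A ** (P + Q) ** B = A ** P ** B + A ** Q ** B" for P Q
    unfolding matrix_add_ldistrib
    by (simp add: matrix_matrix_mult_def vec_eq_iff sum.distrib distrib_right)
qed (simp add: matrix_scalar_ac scalar_matrix_assoc)

lemma info_matrix_linear_image:
  assumes "set_pmf \<eta> \<subseteq> S" "\<And>x. x \<in> S \<Longrightarrow> f x = A *v g x"
  shows "info_matrix f \<eta> = A ** info_matrix g \<eta> ** transpose A"
proof -
  have "info_matrix f \<eta> = (\<Sum>x\<in>set_pmf \<eta>. pmf \<eta> x *\<^sub>R (A ** outer_prod (g x) ** transpose A))"
    unfolding info_matrix_def outer_prod_matrix_vector_mult[symmetric]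
    by (rule sum.cong) (use assms in \<open>auto simp: outer_prod_def\<close>)
  then show ?thesis
    by (simp add: linear_sum[OF linear_matrix_sandwich] linear_scale[OF linear_matrix_sandwich]
        info_matrix_def outer_prod_def o_def)
qed

lemma info_matrix_diff_eq:
  assumes "finite (set_pmf \<xi>)" "finite (set_pmf \<xi>')" "finite (set_pmf \<eta>)" "finite (set_pmf \<eta>')"
    and "\<And>x. pmf \<xi>' x - pmf \<xi> x = p * (pmf \<eta>' x - pmf \<eta> x)"
  shows "info_matrix f \<xi>' - info_matrix f \<xi> = p *\<^sub>R (info_matrix f \<eta>' - info_matrix f \<eta>)"
proof -
  define F where "F = set_pmf \<xi> \<union> set_pmf \<xi>' \<union> set_pmf \<eta> \<union> set_pmf \<eta>'"
  have F: "finite F" using assms(1-4) by (simp add: F_def)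
  have "info_matrix f \<xi>' - info_matrix f \<xi> = (\<Sum>x\<in>F. (pmf \<xi>' x - pmf \<xi> x) *\<^sub>R outer_prod (f x))"
    by (subst (1 2) info_matrix_eq_sum[OF F]) (auto simp: F_def sum_subtractf scaleR_diff_left)
  also have "\<dots> = p *\<^sub>R (\<Sum>x\<in>F. (pmf \<eta>' x - pmf \<eta> x) *\<^sub>R outer_prod (f x))"
    by (simp add: assms(5) scaleR_sum_right)
  also have "\<dots> = p *\<^sub>R (info_matrix f \<eta>' - info_matrix f \<eta>)"
    by (subst (1 2) info_matrix_eq_sum[OF F]) (auto simp: F_def sum_subtractf scaleR_diff_left)
  finally show ?thesis .
qed

lemma nonneg_def_congruence:
  fixes A :: "real^'q^'p"
  assumes "nonneg_def D" "p \<ge> 0"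
  shows "nonneg_def (p *\<^sub>R (A ** D ** transpose A))"
  unfolding nonneg_def_def
proof (intro conjI allI)
  have "transpose D = D" using assms(1) unfolding nonneg_def_def by blast
  then show "transpose (p *\<^sub>R (A ** D ** transpose A)) = p *\<^sub>R (A ** D ** transpose A)"
    by (simp add: transpose_scalar matrix_transpose_mul matrix_mul_assoc)
  fix v :: "real^'p"
  have "v \<bullet> ((p *\<^sub>R (A ** D ** transpose A)) *v v)
      = p * ((transpose A *v v) \<bullet> (D *v (transpose A *v v)))"
    by (simp add: scaleR_matrix_vector_assoc[symmetric] matrix_vector_mul_assoc[symmetric]
        dot_lmul_matrix[symmetric] transpose_matrix_vector)
  then show "0 \<le> v \<bullet> ((p *\<^sub>R (A ** D ** transpose A)) *v v)"
    using assms unfolding nonneg_def_def by simp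
qed

lemma congruence_eq_0_imp_eq_0:
  fixes A :: "real^'q^'p"
  assumes "C ** A = mat 1" "A ** D ** transpose A = 0"
  shows "D = 0"
proof -
  have "D = (C ** A) ** D ** transpose (C ** A)" by (simp add: assms(1))
  also have "\<dots> = C ** (A ** D ** transpose A) ** transpose C"
    by (simp add: matrix_transpose_mul matrix_mul_assoc)
  finally show ?thesis using assms(2) by simp
qed

lemma matrix_of_span_on:
  assumes "\<And>i. \<exists>d. \<forall>x\<in>S. f x $ i = d \<bullet> g x"
  obtains A :: "real^'q^'p" where "\<And>x. x \<in> S \<Longrightarrow> f x = A *v g x"
proof -
  obtain d where "\<And>i x. x \<in> S \<Longrightarrow> f x $ i = d i \<bullet> g x"
    using assms by metis
  then have "\<And>x. x \<in> S \<Longrightarrow> f x = (\<chi> i. d i) *v g x"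
    by (simp add: vec_eq_iff matrix_vector_mul_component)
  then show thesis using that by blast
qed

lemma lin_indep_on_matrix_eq:
  fixes M N :: "real^'q^'p"
  assumes "lin_indep_on S g" "\<And>x. x \<in> S \<Longrightarrow> M *v g x = N *v g x"
  shows "M = N"
proof -
  have "M $ i - N $ i = 0" for i
  proof -
    have "(M $ i - N $ i) \<bullet> g x = 0" if "x \<in> S" for x
      using assms(2)[OF that]
      by (metis inner_diff_left matrix_vector_mul_component right_minus_eq)
    then show ?thesis using assms(1) unfolding lin_indep_on_def by blast
  qed
  then show ?thesis by (simp add: vec_eq_iff)
qed

lemma same_span_on_left_invertible:
  fixes f :: "'a \<Rightarrow> real^'p" and g :: "'a \<Rightarrow> real^'q"
  assumes "same_span_on S f g" "lin_indep_on S g"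
  obtains A :: "real^'q^'p" and C where "\<And>x. x \<in> S \<Longrightarrow> f x = A *v g x" "C ** A = mat 1"
proof -
  obtain A :: "real^'q^'p" where fA: "\<And>x. x \<in> S \<Longrightarrow> f x = A *v g x"
    using assms(1) matrix_of_span_on unfolding same_span_on_def by metis
  obtain C :: "real^'p^'q" where gC: "\<And>x. x \<in> S \<Longrightarrow> g x = C *v f x"
    using assms(1) matrix_of_span_on unfolding same_span_on_def by metis
  have "C ** A = mat 1"
    by (rule lin_indep_on_matrix_eq[OF assms(2)])
      (simp add: matrix_vector_mul_assoc[symmetric] flip: fA gC)
  with fA show thesis using that by blast
qed

definition resample_on :: "'a set \<Rightarrow> 'a pmf \<Rightarrow> 'a pmf \<Rightarrow> 'a pmf" where
  "resample_on S \<eta> \<xi> = bind_pmf \<xi> (\<lambda>y. if y \<in> S then \<eta> else return_pmf y)"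

lemma pmf_resample_on:
  "pmf (resample_on S \<eta> \<xi>) x = measure_pmf.prob \<xi> S * pmf \<eta> x + (if x \<in> S then 0 else pmf \<xi> x)"
proof -
  have "(\<lambda>y. pmf (if y \<in> S then \<eta> else return_pmf y) x) =
        (\<lambda>y. indicator S y * pmf \<eta> x + (if x \<in> S then 0 else indicator {x} y))"
    by (auto simp: indicator_def fun_eq_iff)
  then show ?thesis
    by (simp add: resample_on_def pmf_bind measure_pmf.emeasure_eq_measure measure_pmf_single
        mult.commute)
qed

lemma set_pmf_resample_on_subset: "set_pmf (resample_on S \<eta> \<xi>) \<subseteq> set_pmf \<xi> \<union> set_pmf \<eta>"
  by (auto simp: resample_on_def split: if_splits)

lemma design_resample_on:
  assumes "design X \<xi>" "design S \<eta>" "S \<subseteq> X"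
  shows "design X (resample_on S \<eta> \<xi>)"
  using assms set_pmf_resample_on_subset[of S \<eta> \<xi>] unfolding design_def
  by (auto intro: finite_subset)

lemma info_matrix_resample_on:
  assumes "finite (set_pmf \<xi>)" "finite (set_pmf \<eta>)" "measure_pmf.prob \<xi> S > 0"
  shows "info_matrix f (resample_on S \<eta> \<xi>) - info_matrix f \<xi> =
           measure_pmf.prob \<xi> S *\<^sub>R (info_matrix f \<eta> - info_matrix f (cond_pmf \<xi> S))"
proof -
  have ne: "set_pmf \<xi> \<inter> S \<noteq> {}"
    using assms(3) measure_pmf_zero_iff[of \<xi> S] by auto
  have "finite (set_pmf (resample_on S \<eta> \<xi>))"
    using assms(1,2) set_pmf_resample_on_subset[of S \<eta> \<xi>] by (meson finite_Un finite_subset)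
  moreover have "finite (set_pmf (cond_pmf \<xi> S))"
    using assms(1) by (simp add: set_cond_pmf[OF ne])
  moreover have "pmf (resample_on S \<eta> \<xi>) x - pmf \<xi> x =
           measure_pmf.prob \<xi> S * (pmf \<eta> x - pmf (cond_pmf \<xi> S) x)" for x
    using assms(3) by (simp add: pmf_resample_on pmf_cond[OF ne] right_diff_distrib)
  ultimately show ?thesis
    using info_matrix_diff_eq assms(1,2) by blast
qed

lemma admissible_cond_pmf:
  fixes f :: "'a \<Rightarrow> real^'p" and g :: "'a \<Rightarrow> real^'q"
  assumes adm: "admissible X f \<xi>" and "S \<subseteq> X"
    and "lin_indep_on S g" and "same_span_on S f g"
    and pos: "measure_pmf.prob \<xi> S > 0"
  shows "admissible S g (cond_pmf \<xi> S)"
proof -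
  define p where "p = measure_pmf.prob \<xi> S"
  define \<eta> where "\<eta> = cond_pmf \<xi> S"
  have \<xi>: "design X \<xi>" using adm unfolding admissible_def by blast
  have set_\<eta>: "set_pmf \<eta> = set_pmf \<xi> \<inter> S"
    using pos measure_pmf_zero_iff[of \<xi> S] by (auto simp: \<eta>_def)
  obtain A :: "real^'q^'p" and C where fA: "\<And>x. x \<in> S \<Longrightarrow> f x = A *v g x" and CA: "C ** A = mat 1"
    using same_span_on_left_invertible assms(3,4) by blast
  show ?thesis
    unfolding admissible_def \<eta>_def[symmetric]
  proof (intro conjI notI)
    show "design S \<eta>" using \<xi> unfolding design_def set_\<eta> by auto
    assume "\<exists>\<eta>'. design S \<eta>' \<and> info_matrix g \<eta>' \<noteq> info_matrix g \<eta> \<and>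
              nonneg_def (info_matrix g \<eta>' - info_matrix g \<eta>)"
    then obtain \<eta>' where \<eta>': "design S \<eta>'" and ne: "info_matrix g \<eta>' \<noteq> info_matrix g \<eta>"
      and nn: "nonneg_def (info_matrix g \<eta>' - info_matrix g \<eta>)" by blast
    define D where "D = info_matrix g \<eta>' - info_matrix g \<eta>"
    define \<xi>' where "\<xi>' = resample_on S \<eta>' \<xi>"
    have "info_matrix f \<xi>' - info_matrix f \<xi> = p *\<^sub>R (info_matrix f \<eta>' - info_matrix f \<eta>)"
      using \<xi> \<eta>' pos unfolding \<xi>'_def p_def \<eta>_def design_def by (intro info_matrix_resample_on) auto
    also have "\<dots> = p *\<^sub>R (A ** D ** transpose A)"
      using \<eta>' set_\<eta> fA unfolding design_def D_def
      by (simp add: info_matrix_linear_image[of _ S f A g] linear_diff[OF linear_matrix_sandwich])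
    finally have diff: "info_matrix f \<xi>' - info_matrix f \<xi> = p *\<^sub>R (A ** D ** transpose A)" .
    have "D \<noteq> 0" using ne by (simp add: D_def)
    then have "info_matrix f \<xi>' \<noteq> info_matrix f \<xi>"
      using diff pos congruence_eq_0_imp_eq_0[OF CA] by (auto simp: p_def)
    moreover have "nonneg_def (info_matrix f \<xi>' - info_matrix f \<xi>)"
      unfolding diff using nn pos by (intro nonneg_def_congruence) (simp_all add: D_def p_def)
    moreover have "design X \<xi>'"
      using \<xi> \<eta>' \<open>S \<subseteq> X\<close> unfolding \<xi>'_def by (rule design_resample_on)
    ultimately show False using adm unfolding admissible_def by blast
  qed
qed

theorem theorem3:
  fixes X :: "(real^2) set"
    and f :: "real^2 \<Rightarrow> real^'p"
    and tf :: "real^2 \<Rightarrow> real"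
    and t :: real
    and ft :: "real^2 \<Rightarrow> real^'q"
    and \<xi> :: "(real^2) pmf"
  assumes "lin_indep_on X f"
    and "t \<in> tf ` X"
    and "lin_indep_on {x\<in>X. tf x = t} ft"
    and "same_span_on {x\<in>X. tf x = t} f ft"
    and "admissible X f \<xi>"
    and "measure_pmf.prob \<xi> {x\<in>X. tf x = t} > 0"
  shows "admissible {x\<in>X. tf x = t} ft (cond_pmf \<xi> {x\<in>X. tf x = t})"
  using assms(3-6) by (intro admissible_cond_pmf) auto

end
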